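(* Consider robust dynamic pricing with horizon $T$, valuation $v^\star\in[0,1)$, and feedback corrupted in at most $C$ rounds, where $C$ is known to the learner. The meta-algorithm described in the context, with the commitment subroutine \textsc{CommitKnown}, guarantees \[ R_T\le \mathcal O(C+\log T), \] with a hidden constant independent of $T$, $C$, $v^\star$ and the adversary.
   Context: Robust dynamic pricing: there are $T$ rounds and an unknown valuation $v^\star\in[0,1)$. At each round $t$ the seller posts a price $p_t\in[0,1]$. The true sale indicator is $y_t=\mathbbm 1\{p_t\le v^\star\}$; the seller observes $\sigma_t\in\{0,1\}$, and at most $C$ rounds are corrupted: $|\{t\in[T]:\sigma_t\neq y_t\}|\le C$. The adversary decides whether to corrupt round $t$ based on the history and on the seller's distribution over $p_t$, but not on the realized $p_t$ (how it corrupts may depend on the realized price). Revenue is $r_t=p_t\,\mathbbm 1\{p_t\le v^\star\}$ and regret is $R_T=Tv^\star-\sum_{t=1}^T r_t$. $\log$ is base $2$. Meta-algorithm: let $D=\lceil\log_2 T\rceil$. Consider the complete binary tree of intervals of depth $D$ with root $[0,1)$, where each non-leaf node $[L,R)$ has children $[L,M)$ and $[M,R)$, $M=(L+R)/2$; the depth-$D$ nodes are the leaves (each of length at most $1/T$). The algorithm keeps a current node $I$, initially the root, and repeats until the horizon ends: if $I=[L,R)$ is not a leaf, it performs a safety check — post $L$ and observe $\sigma_L$, post $R$ and observe $\sigma_R$; the check fails if $\sigma_L=0$ or $\sigma_R=1$ (by convention the query at $L=0$ and the query at $R=1$ always count as passing). On failure $I$ becomes its parent; otherwise it posts $M$, observes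 $\sigma_M$, and $I$ becomes $[M,R)$ if $\sigma_M=1$ and $[L,M)$ if $\sigma_M=0$. If $I$ is a leaf, the commitment subroutine is run on $I$; if it returns FAIL, $I$ becomes its parent. \textsc{CommitKnown}: each leaf $\ell$ has a counter $s_\ell$, initialized to $0$ at the start of the horizon and shared across all calls. On leaf $\ell=[L,R)$ it repeats: if $s_\ell\le C$, post $L$ and observe $\sigma_L$, post $R$ and observe $\sigma_R$; if $\sigma_L=0$ or $\sigma_R=1$, return FAIL, else increase $s_\ell$ by $1$. If $s_\ell>C$, post $L$ (and continue doing so). *)

theory Defs
  imports Complex_Main
begin

text \<open>Robust dynamic pricing: the meta-algorithm with subroutine CommitKnown,
  modelled as a deterministic state machine that posts exactly one price per round.
  A node of the binary interval tree is encoded by its depth d and index k,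
  representing the interval [k/2^d, (k+1)/2^d).\<close>

datatype phase =
    ChkL            \<comment> \<open>safety check at an internal node: about to post L\<close>
  | ChkR bool       \<comment> \<open>about to post R; argument: whether the L-query passed\<close>
  | MidQ
  | LeafL           \<comment> \<open>CommitKnown, counter \<le> C: about to post L\<close>
  | LeafR bool      \<comment> \<open>CommitKnown: about to post R; argument: whether the L-query passed\<close>
  | Commit          \<comment> \<open>CommitKnown, counter > C: post L forever\<close>

record pstate =
  dep :: nat
  idx :: nat
  ph  :: phase
  cnt :: "nat \<Rightarrow> nat"   \<comment> \<open>counters s_l of the leaves (indexed by leaf index), shared across calls\<close>

definition tree_depth :: "nat \<Rightarrow> nat" where
  "tree_depth T = nat \<lceil>log 2 (real T)\<rceil>"

definition left_end :: "nat \<Rightarrow> nat \<Rightarrow> real" where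
  "left_end d k = real k / 2 ^ d"

definition right_end :: "nat \<Rightarrow> nat \<Rightarrow> real" where
  "right_end d k = real (Suc k) / 2 ^ d"

definition mid_pt :: "nat \<Rightarrow> nat \<Rightarrow> real" where
  "mid_pt d k = real (2 * k + 1) / 2 ^ Suc d"

definition start_phase :: "nat \<Rightarrow> nat \<Rightarrow> (nat \<Rightarrow> nat) \<Rightarrow> nat \<Rightarrow> nat \<Rightarrow> phase" where
  "start_phase D C s d k =
     (if d = D then (if s k \<le> C then LeafL else Commit) else ChkL)"

definition goto :: "nat \<Rightarrow> nat \<Rightarrow> pstate \<Rightarrow> nat \<Rightarrow> nat \<Rightarrow> pstate" where
  "goto D C st d k = st\<lparr>dep := d, idx := k, ph := start_phase D C (cnt st) d k\<rparr>"

definition goto_parent :: "nat \<Rightarrow> nat \<Rightarrow> pstate \<Rightarrow> pstate" where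
  "goto_parent D C st = goto D C st (dep st - 1) (idx st div 2)"

definition posted_price :: "pstate \<Rightarrow> real" where
  "posted_price st = (case ph st of
      ChkL \<Rightarrow> left_end (dep st) (idx st)
    | ChkR _ \<Rightarrow> right_end (dep st) (idx st)
    | MidQ \<Rightarrow> mid_pt (dep st) (idx st)
    | LeafL \<Rightarrow> left_end (dep st) (idx st)
    | LeafR _ \<Rightarrow> right_end (dep st) (idx st)
    | Commit \<Rightarrow> left_end (dep st) (idx st))"

text \<open>Query at L passes if L = 0 or the observed bit is 1; query at R passes if R = 1 or
  the observed bit is 0.\<close>
definition passL :: "pstate \<Rightarrow> bool \<Rightarrow> bool" where
  "passL st \<sigma> = (idx st = 0 \<or> \<sigma>)"

definition passR :: "pstate \<Rightarrow> bool \<Rightarrow> bool" where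
  "passR st \<sigma> = (Suc (idx st) = 2 ^ dep st \<or> \<not> \<sigma>)"

definition alg_step :: "nat \<Rightarrow> nat \<Rightarrow> pstate \<Rightarrow> bool \<Rightarrow> pstate" where
  "alg_step D C st \<sigma> = (case ph st of
      ChkL \<Rightarrow> st\<lparr>ph := ChkR (passL st \<sigma>)\<rparr>
    | ChkR pl \<Rightarrow> (if pl \<and> passR st \<sigma> then st\<lparr>ph := MidQ\<rparr> else goto_parent D C st)
    | MidQ \<Rightarrow> (if \<sigma> then goto D C st (Suc (dep st)) (2 * idx st + 1)
                     else goto D C st (Suc (dep st)) (2 * idx st))
    | LeafL \<Rightarrow> st\<lparr>ph := LeafR (passL st \<sigma>)\<rparr>
    | LeafR pl \<Rightarrow> (if pl \<and> passR st \<sigma>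
                   then goto D C (st\<lparr>cnt := (cnt st)(idx st := Suc (cnt st (idx st)))\<rparr>)
                          (dep st) (idx st)
                   else goto_parent D C st)
    | Commit \<Rightarrow> st)"

definition init_state :: "nat \<Rightarrow> nat \<Rightarrow> pstate" where
  "init_state D C = \<lparr>dep = 0, idx = 0, ph = start_phase D C (\<lambda>_. 0) 0 0, cnt = (\<lambda>_. 0)\<rparr>"

text \<open>An adversary maps the history (list of posted prices and observed bits) and the
  current posted price to the observed bit. Since the algorithm is deterministic,
  knowing the seller's distribution over the price means knowing the price.\<close>
type_synonym adversary = "(real \<times> bool) list \<Rightarrow> real \<Rightarrow> bool"

text \<open>State and history at the beginning of round t (rounds numbered from 0).\<close>
fun run :: "nat \<Rightarrow> nat \<Rightarrow> adversary \<Rightarrow> nat \<Rightarrow> pstate \<times> (real \<times> bool) list" where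
  "run T C adv 0 = (init_state (tree_depth T) C, [])"
| "run T C adv (Suc t) =
     (let (st, h) = run T C adv t; p = posted_price st; \<sigma> = adv h p
      in (alg_step (tree_depth T) C st \<sigma>, h @ [(p, \<sigma>)]))"

definition price :: "nat \<Rightarrow> nat \<Rightarrow> adversary \<Rightarrow> nat \<Rightarrow> real" where
  "price T C adv t = posted_price (fst (run T C adv t))"

definition observed :: "nat \<Rightarrow> nat \<Rightarrow> adversary \<Rightarrow> nat \<Rightarrow> bool" where
  "observed T C adv t = adv (snd (run T C adv t)) (price T C adv t)"

definition corrupted_rounds :: "nat \<Rightarrow> nat \<Rightarrow> adversary \<Rightarrow> real \<Rightarrow> nat set" where
  "corrupted_rounds T C adv v =
     {t. t < T \<and> observed T C adv t \<noteq> (price T C adv t \<le> v)}"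

definition regret :: "nat \<Rightarrow> nat \<Rightarrow> adversary \<Rightarrow> real \<Rightarrow> real" where
  "regret T C adv v =
     real T * v - (\<Sum>t<T. price T C adv t * (if price T C adv t \<le> v then 1 else 0))"

end

theory Submission
  imports Defs
begin

text \<open>Fix the leaf g containing v. The potential of a state is three times the node
  potential of the current node (its height plus twice the number of nodes on its root path
  that miss v), plus a bonus of at most 7 for the position inside a safety check, plus
  2 (C + 1 - s_g). Outside the commitment phase an uncorrupted round decreases the potential
  by at least one and a corrupted round increases it by at most 5. A leaf missing v fails one
  of its two honest queries, so its counter only grows through corruptions and never exceeds C;
  hence the algorithm can only commit to g, where a round loses less than 1/T. Summing,
  the regret is at most 1 + (3D + 2C + 4) + 6C with D = \<lceil>log T\<rceil>.\<close>

section \<open>Dyadic intervals\<close>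

definition node_contains :: "real \<Rightarrow> nat \<Rightarrow> nat \<Rightarrow> bool" where
  "node_contains v d k \<longleftrightarrow> left_end d k \<le> v \<and> v < right_end d k"

lemma node_contains_root: "0 \<le> v \<Longrightarrow> v < 1 \<Longrightarrow> node_contains v 0 0"
  unfolding node_contains_def left_end_def right_end_def by simp

lemma node_contains_child:
  assumes "node_contains v d k"
  shows "node_contains v (Suc d) (if mid_pt d k \<le> v then 2 * k + 1 else 2 * k)"
  using assms unfolding node_contains_def left_end_def right_end_def mid_pt_def
  by (auto simp: field_simps)

lemma node_contains_unique: "node_contains v d k \<Longrightarrow> node_contains v d k' \<Longrightarrow> k = k'"
proof -
  assume "node_contains v d k" "node_contains v d k'"
  then have "real k < real k' + 1" "real k' < real k + 1"
    unfolding node_contains_def left_end_def right_end_def by (auto simp: field_simps)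
  then show "k = k'" by linarith
qed

lemma node_contains_exists: "0 \<le> v \<Longrightarrow> \<exists>k. node_contains v d k"
proof
  assume "0 \<le> v"
  then have "real (nat \<lfloor>v * 2 ^ d\<rfloor>) = of_int \<lfloor>v * 2 ^ d\<rfloor>" by simp
  then have "real (nat \<lfloor>v * 2 ^ d\<rfloor>) \<le> v * 2 ^ d" "v * 2 ^ d < real (nat \<lfloor>v * 2 ^ d\<rfloor>) + 1"
    by linarith+
  then show "node_contains v d (nat \<lfloor>v * 2 ^ d\<rfloor>)"
    unfolding node_contains_def left_end_def right_end_def by (auto simp: field_simps)
qed

lemma node_contains_gap: "node_contains v d k \<Longrightarrow> v - left_end d k < 1 / 2 ^ d"
proof -
  have "right_end d k = left_end d k + 1 / 2 ^ d"
    by (simp add: left_end_def right_end_def add_divide_distrib)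
  then show "node_contains v d k \<Longrightarrow> v - left_end d k < 1 / 2 ^ d"
    unfolding node_contains_def by linarith
qed

section \<open>Honest answers and well-formed states\<close>

definition honest_passL :: "real \<Rightarrow> pstate \<Rightarrow> bool" where
  "honest_passL v st = passL st (left_end (dep st) (idx st) \<le> v)"

definition honest_passR :: "real \<Rightarrow> pstate \<Rightarrow> bool" where
  "honest_passR v st = passR st (right_end (dep st) (idx st) \<le> v)"

lemma node_contains_iff_honest_pass:
  assumes "0 \<le> v" "v < 1"
  shows "node_contains v (dep st) (idx st) \<longleftrightarrow> honest_passL v st \<and> honest_passR v st"
proof -
  have "right_end (dep st) (idx st) = 1" if "Suc (idx st) = 2 ^ dep st"
  proof -
    from that have "real (Suc (idx st)) = 2 ^ dep st" by (metis of_nat_numeral of_nat_power)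
    then show ?thesis unfolding right_end_def by simp
  qed
  with assms show ?thesis
    unfolding node_contains_def honest_passL_def honest_passR_def passL_def passR_def
    by (auto simp: left_end_def)
qed

definition wf_state :: "nat \<Rightarrow> nat \<Rightarrow> pstate \<Rightarrow> bool" where
  "wf_state D C st \<longleftrightarrow> dep st \<le> D \<and> idx st < 2 ^ dep st \<and>
    (case ph st of
       ChkL \<Rightarrow> dep st < D | ChkR _ \<Rightarrow> dep st < D | MidQ \<Rightarrow> dep st < D
     | LeafL \<Rightarrow> dep st = D \<and> cnt st (idx st) \<le> C
     | LeafR _ \<Rightarrow> dep st = D \<and> cnt st (idx st) \<le> C
     | Commit \<Rightarrow> dep st = D \<and> C < cnt st (idx st))"

lemma goto_simps [simp]:
  "dep (goto D C st d k) = d" "idx (goto D C st d k) = k" "cnt (goto D C st d k) = cnt st"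
  "ph (goto D C st d k) = start_phase D C (cnt st) d k"
  by (simp_all add: goto_def)

lemma wf_state_goto: "d \<le> D \<Longrightarrow> k < 2 ^ d \<Longrightarrow> wf_state D C (goto D C st d k)"
  by (auto simp: wf_state_def start_phase_def)

lemma wf_state_init: "wf_state D C (init_state D C)"
  by (simp add: wf_state_def init_state_def start_phase_def)

lemma wf_state_step:
  assumes wf: "wf_state D C st"
  shows "wf_state D C (alg_step D C st \<sigma>)"
proof -
  have node: "dep st \<le> D" "idx st < 2 ^ dep st" using wf by (auto simp: wf_state_def)
  then have "idx st div 2 < 2 ^ (dep st - 1)" by (cases "dep st") auto
  with node have parent: "wf_state D C (goto_parent D C st)"
    unfolding goto_parent_def by (intro wf_state_goto) auto
  show ?thesis
  proof (cases "ph st")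
    case MidQ
    with wf have "dep st < D" by (auto simp: wf_state_def)
    with MidQ node show ?thesis by (auto simp: alg_step_def intro!: wf_state_goto)
  next
    case LeafR
    with wf parent node show ?thesis by (auto simp: alg_step_def wf_state_def start_phase_def)
  qed (use wf parent in \<open>auto simp: alg_step_def wf_state_def\<close>)
qed

section \<open>The potential\<close>

fun misses_on_path :: "real \<Rightarrow> nat \<Rightarrow> nat \<Rightarrow> nat" where
  "misses_on_path v 0 k = 0"
| "misses_on_path v (Suc d) k =
     misses_on_path v d (k div 2) + (if node_contains v (Suc d) k then 0 else 1)"

definition node_potential :: "nat \<Rightarrow> real \<Rightarrow> nat \<Rightarrow> nat \<Rightarrow> nat" where
  "node_potential D v d k = (D - d) + 2 * misses_on_path v d k"

lemma node_potential_child_le: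
  "d < D \<Longrightarrow> node_potential D v (Suc d) k \<le> node_potential D v d (k div 2) + 1"
  unfolding node_potential_def by simp arith

lemma node_potential_child_contains:
  "d < D \<Longrightarrow> node_potential D v (Suc d) k + 1 = node_potential D v d (k div 2) \<longleftrightarrow>
     node_contains v (Suc d) k"
  unfolding node_potential_def by auto

lemma node_potential_parent_le:
  "d \<le> D \<Longrightarrow> node_potential D v (d - 1) (k div 2) \<le> node_potential D v d k + 1"
  unfolding node_potential_def by (cases d) auto

lemma node_potential_parent_misses:
  assumes "d \<le> D" "k < 2 ^ d" "0 \<le> v" "v < 1" "\<not> node_contains v d k"
  shows "node_potential D v (d - 1) (k div 2) + 1 = node_potential D v d k"
  using assms node_contains_root[of v] unfolding node_potential_def by (cases d) auto

text \<open>Measured relative to three times the node potential, the bonus of a pending R-query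
  exceeds by at least one the bonus of the state its honest answer leads to (a failed check
  moves to the parent, a passed one to the midpoint query or to the next round of CommitKnown).
  This is what makes every honest round decrease the potential.\<close>

definition rquery_potential :: "real \<Rightarrow> pstate \<Rightarrow> bool \<Rightarrow> nat" where
  "rquery_potential v st passedL =
     (if passedL \<and> honest_passR v st
      then (if node_contains v (dep st) (idx st) then 1 else 7)
      else (if node_contains v (dep st) (idx st) then 6 else 1))"

definition phase_potential :: "real \<Rightarrow> pstate \<Rightarrow> nat" where
  "phase_potential v st = (case ph st of
      ChkL \<Rightarrow> 2
    | ChkR passedL \<Rightarrow> rquery_potential v st passedL
    | MidQ \<Rightarrow> (if node_contains v (dep st) (idx st) then 0 else 6)
    | LeafL \<Rightarrow> 2
    | LeafR passedL \<Rightarrow> rquery_potential v st passedL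
    | Commit \<Rightarrow> 0)"

definition potential :: "nat \<Rightarrow> nat \<Rightarrow> real \<Rightarrow> nat \<Rightarrow> pstate \<Rightarrow> nat" where
  "potential D C v g st =
     3 * node_potential D v (dep st) (idx st) + phase_potential v st + 2 * (Suc C - cnt st g)"

lemma rquery_potential_le: "rquery_potential v st passedL \<le> 7"
  by (simp add: rquery_potential_def)

lemma rquery_potential_honest_passL:
  "0 \<le> v \<Longrightarrow> v < 1 \<Longrightarrow> rquery_potential v st (honest_passL v st) = 1"
  using node_contains_iff_honest_pass[of v st] by (auto simp: rquery_potential_def)

lemma rquery_potential_ph_update [simp]:
  "rquery_potential v (st\<lparr>ph := p\<rparr>) passedL = rquery_potential v st passedL"
  by (simp add: rquery_potential_def honest_passR_def passR_def)

lemma potential_init: "potential D C v g (init_state D C) = 3 * D + 2 * C + 4"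
  by (simp add: potential_def init_state_def node_potential_def phase_potential_def
      start_phase_def)

lemma potential_goto_le:
  "potential D C v g (goto D C st d k) \<le> 3 * node_potential D v d k + 2 + 2 * (Suc C - cnt st g)"
  by (simp add: potential_def phase_potential_def start_phase_def)

lemma potential_goto_parent:
  fixes g :: nat
  assumes "wf_state D C st" "0 \<le> v" "v < 1"
  defines "P \<equiv> node_potential D v (dep st) (idx st)" and "W \<equiv> 2 * (Suc C - cnt st g)"
  shows "potential D C v g (goto_parent D C st) \<le> 3 * P + 5 + W"
    and "\<not> node_contains v (dep st) (idx st) \<Longrightarrow> potential D C v g (goto_parent D C st) + 1 \<le> 3 * P + W"
proof -
  have node: "dep st \<le> D" "idx st < 2 ^ dep st" using assms(1) by (auto simp: wf_state_def)
  have parent: "potential D C v g (goto_parent D C st)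
      \<le> 3 * node_potential D v (dep st - 1) (idx st div 2) + 2 + W"
    unfolding goto_parent_def W_def by (rule potential_goto_le)
  with node_potential_parent_le[OF node(1), of v "idx st"]
  show "potential D C v g (goto_parent D C st) \<le> 3 * P + 5 + W"
    unfolding P_def by linarith
  assume "\<not> node_contains v (dep st) (idx st)"
  with parent node_potential_parent_misses[OF node assms(2,3)]
  show "potential D C v g (goto_parent D C st) + 1 \<le> 3 * P + W"
    unfolding P_def by fastforce
qed

lemma potential_step_L_query:
  assumes "ph st = ChkL \<or> ph st = LeafL" "0 \<le> v" "v < 1"
  shows "potential D C v g (alg_step D C st \<sigma>) \<le> potential D C v g st + 5"
    and "\<sigma> = (posted_price st \<le> v) \<Longrightarrow>
           potential D C v g (alg_step D C st \<sigma>) + 1 \<le> potential D C v g st"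
proof -
  have step: "potential D C v g (alg_step D C st \<sigma>) + 2 =
      potential D C v g st + rquery_potential v st (passL st \<sigma>)"
    using assms(1) by (auto simp: alg_step_def potential_def phase_potential_def)
  with rquery_potential_le[of v st "passL st \<sigma>"]
  show "potential D C v g (alg_step D C st \<sigma>) \<le> potential D C v g st + 5" by linarith
  assume "\<sigma> = (posted_price st \<le> v)"
  with assms(1) have "passL st \<sigma> = honest_passL v st"
    by (auto simp: posted_price_def honest_passL_def)
  with step rquery_potential_honest_passL[OF assms(2,3), of st]
  show "potential D C v g (alg_step D C st \<sigma>) + 1 \<le> potential D C v g st" by simp
qed

lemma potential_step_check_fails:
  assumes "ph st = ChkR passedL \<or> ph st = LeafR passedL" "\<not> (passedL \<and> passR st \<sigma>)"
    and "wf_state D C st" "0 \<le> v" "v < 1"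
  shows "potential D C v g (alg_step D C st \<sigma>) \<le> potential D C v g st + 4"
    and "\<sigma> = (posted_price st \<le> v) \<Longrightarrow>
           potential D C v g (alg_step D C st \<sigma>) + 1 \<le> potential D C v g st"
proof -
  have step: "alg_step D C st \<sigma> = goto_parent D C st"
    using assms(1,2) by (auto simp: alg_step_def)
  have old: "potential D C v g st = 3 * node_potential D v (dep st) (idx st) +
      rquery_potential v st passedL + 2 * (Suc C - cnt st g)"
    using assms(1) by (auto simp: potential_def phase_potential_def)
  note parent = potential_goto_parent[OF assms(3-5), of g]
  have "1 \<le> rquery_potential v st passedL"
    by (simp add: rquery_potential_def)
  with parent(1) show "potential D C v g (alg_step D C st \<sigma>) \<le> potential D C v g st + 4"
    unfolding step old by linarith
  assume "\<sigma> = (posted_price st \<le> v)"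
  with assms(1,2) have "\<not> (passedL \<and> honest_passR v st)"
    by (auto simp: posted_price_def honest_passR_def)
  with parent show "potential D C v g (alg_step D C st \<sigma>) + 1 \<le> potential D C v g st"
    unfolding step old by (cases "node_contains v (dep st) (idx st)")
      (auto simp: rquery_potential_def)
qed

lemma potential_step_check_passes:
  assumes "ph st = ChkR passedL" "passedL \<and> passR st \<sigma>"
  shows "potential D C v g (alg_step D C st \<sigma>) \<le> potential D C v g st + 5"
    and "\<sigma> = (posted_price st \<le> v) \<Longrightarrow>
           potential D C v g (alg_step D C st \<sigma>) + 1 \<le> potential D C v g st"
proof -
  have step: "alg_step D C st \<sigma> = st\<lparr>ph := MidQ\<rparr>"
    using assms by (simp add: alg_step_def)
  show "potential D C v g (alg_step D C st \<sigma>) \<le> potential D C v g st + 5"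
    using assms(1) unfolding step
    by (auto simp: potential_def phase_potential_def rquery_potential_def)
  assume "\<sigma> = (posted_price st \<le> v)"
  with assms have "honest_passR v st"
    by (simp add: posted_price_def honest_passR_def)
  with assms show "potential D C v g (alg_step D C st \<sigma>) + 1 \<le> potential D C v g st"
    unfolding step by (auto simp: potential_def phase_potential_def rquery_potential_def)
qed

lemma potential_step_leaf_credit:
  assumes "ph st = LeafR passedL" "passedL \<and> passR st \<sigma>"
    and "wf_state D C st" "node_contains v D g"
  shows "potential D C v g (alg_step D C st \<sigma>) \<le> potential D C v g st + 1"
    and "\<sigma> = (posted_price st \<le> v) \<Longrightarrow>
           potential D C v g (alg_step D C st \<sigma>) + 1 \<le> potential D C v g st"
proof -
  define P where "P = node_potential D v (dep st) (idx st)"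
  define W where "W = 2 * (Suc C - cnt st g)"
  define st' where "st' = st\<lparr>cnt := (cnt st)(idx st := Suc (cnt st (idx st)))\<rparr>"
  have leaf: "dep st = D" "cnt st (idx st) \<le> C"
    using assms(1,3) by (auto simp: wf_state_def)
  have old: "potential D C v g st = 3 * P + rquery_potential v st passedL + W"
    using assms(1) by (simp add: potential_def phase_potential_def P_def W_def)
  have step: "alg_step D C st \<sigma> = goto D C st' (dep st) (idx st)"
    using assms(1,2) by (simp add: alg_step_def st'_def)
  have "potential D C v g (alg_step D C st \<sigma>) \<le> 3 * P + 2 + 2 * (Suc C - cnt st' g)"
    unfolding step P_def by (rule potential_goto_le)
  moreover have "2 * (Suc C - cnt st' g) \<le> W"
    unfolding W_def st'_def by auto
  moreover have "2 * (Suc C - cnt st' g) + 2 = W" if "node_contains v (dep st) (idx st)"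
    using node_contains_unique[OF that[unfolded leaf] assms(4)] leaf
    unfolding W_def st'_def by auto
  ultimately have new: "potential D C v g (alg_step D C st \<sigma>) \<le> 3 * P + 2 + W"
    "node_contains v (dep st) (idx st) \<Longrightarrow> potential D C v g (alg_step D C st \<sigma>) \<le> 3 * P + W"
    by linarith+
  then show "potential D C v g (alg_step D C st \<sigma>) \<le> potential D C v g st + 1"
    unfolding old by (auto simp: rquery_potential_def)
  assume "\<sigma> = (posted_price st \<le> v)"
  with assms have "honest_passR v st"
    by (simp add: posted_price_def honest_passR_def)
  with assms(2) new show "potential D C v g (alg_step D C st \<sigma>) + 1 \<le> potential D C v g st"
    unfolding old by (auto simp: rquery_potential_def)
qed

lemma potential_step_midpoint:
  assumes "ph st = MidQ" "wf_state D C st"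
  shows "potential D C v g (alg_step D C st \<sigma>) \<le> potential D C v g st + 5"
    and "\<sigma> = (posted_price st \<le> v) \<Longrightarrow>
           potential D C v g (alg_step D C st \<sigma>) + 1 \<le> potential D C v g st"
proof -
  define P where "P = node_potential D v (dep st) (idx st)"
  define W where "W = 2 * (Suc C - cnt st g)"
  define k where "k = (if \<sigma> then 2 * idx st + 1 else 2 * idx st)"
  have internal: "dep st < D" using assms by (auto simp: wf_state_def)
  have parent: "k div 2 = idx st" unfolding k_def by simp
  have old: "potential D C v g st = 3 * P + (if node_contains v (dep st) (idx st) then 0 else 6) + W"
    using assms(1) by (simp add: potential_def phase_potential_def P_def W_def)
  have new: "potential D C v g (alg_step D C st \<sigma>) \<le> 3 * node_potential D v (Suc (dep st)) k + 2 + W"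
    using assms(1) potential_goto_le unfolding W_def k_def by (simp add: alg_step_def)
  moreover have "node_potential D v (Suc (dep st)) k \<le> P + 1"
    using node_potential_child_le[OF internal, of v k] unfolding parent P_def .
  ultimately show "potential D C v g (alg_step D C st \<sigma>) \<le> potential D C v g st + 5"
    unfolding old by linarith
  assume "\<sigma> = (posted_price st \<le> v)"
  then have "node_contains v (Suc (dep st)) k" if "node_contains v (dep st) (idx st)"
    using node_contains_child[OF that] assms(1) by (simp add: k_def posted_price_def)
  then have "node_contains v (dep st) (idx st) \<Longrightarrow> node_potential D v (Suc (dep st)) k + 1 = P"
    using node_potential_child_contains[OF internal, of v k] unfolding parent P_def by blast
  with new \<open>node_potential D v (Suc (dep st)) k \<le> P + 1\<close>
  show "potential D C v g (alg_step D C st \<sigma>) + 1 \<le> potential D C v g st"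
    unfolding old by (cases "node_contains v (dep st) (idx st)") auto
qed

lemma potential_step:
  assumes "wf_state D C st" "0 \<le> v" "v < 1" "node_contains v D g" "ph st \<noteq> Commit"
  shows "potential D C v g (alg_step D C st \<sigma>) \<le> potential D C v g st + 5"
    and "\<sigma> = (posted_price st \<le> v) \<Longrightarrow>
           potential D C v g (alg_step D C st \<sigma>) + 1 \<le> potential D C v g st"
proof -
  consider (L_query) "ph st = ChkL \<or> ph st = LeafL"
    | (check_passes) passedL where "ph st = ChkR passedL" "passedL \<and> passR st \<sigma>"
    | (leaf_credit) passedL where "ph st = LeafR passedL" "passedL \<and> passR st \<sigma>"
    | (check_fails) passedL where "ph st = ChkR passedL \<or> ph st = LeafR passedL"
        "\<not> (passedL \<and> passR st \<sigma>)"
    | (midpoint) "ph st = MidQ"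
    using assms(5) by (cases "ph st") auto
  then have "potential D C v g (alg_step D C st \<sigma>) \<le> potential D C v g st + 5 \<and>
    (\<sigma> = (posted_price st \<le> v) \<longrightarrow> potential D C v g (alg_step D C st \<sigma>) + 1 \<le> potential D C v g st)"
  proof cases
    case L_query
    from potential_step_L_query[OF L_query assms(2,3)] show ?thesis by fastforce
  next
    case check_passes
    from potential_step_check_passes[OF check_passes] show ?thesis by fastforce
  next
    case leaf_credit
    from potential_step_leaf_credit[OF leaf_credit assms(1,4)] show ?thesis by fastforce
  next
    case check_fails
    from potential_step_check_fails[OF check_fails assms(1-3), where g = g] show ?thesis by fastforce
  next
    case midpoint
    from potential_step_midpoint[OF midpoint assms(1)] show ?thesis by fastforce
  qed
  then show "potential D C v g (alg_step D C st \<sigma>) \<le> potential D C v g st + 5"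
    and "\<sigma> = (posted_price st \<le> v) \<Longrightarrow>
           potential D C v g (alg_step D C st \<sigma>) + 1 \<le> potential D C v g st"
    by auto
qed

section \<open>Leaf counters\<close>

text \<open>A leaf missing v fails one of its two honest queries, so its counter only advances
  through a corrupted query. If it is the L-query, the corruption happens one round before the
  increment; this flag carries it over.\<close>

definition corrupt_pass_pending :: "real \<Rightarrow> pstate \<Rightarrow> nat \<Rightarrow> bool" where
  "corrupt_pass_pending v st k \<longleftrightarrow> idx st = k \<and> ph st = LeafR True \<and> \<not> honest_passL v st"

lemma not_corrupt_pass_pending_goto [simp]:
  "\<not> corrupt_pass_pending v (goto D C st d k) k'"
  "\<not> corrupt_pass_pending v (goto_parent D C st) k'"
  by (simp_all add: corrupt_pass_pending_def goto_parent_def start_phase_def)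

lemma corrupt_pass_pending_ph_update [simp]:
  "corrupt_pass_pending v (st\<lparr>ph := p\<rparr>) k \<longleftrightarrow> idx st = k \<and> p = LeafR True \<and> \<not> honest_passL v st"
  by (simp add: corrupt_pass_pending_def honest_passL_def passL_def)

lemma counter_step_LeafR:
  assumes "ph st = LeafR passedL" "wf_state D C st" "0 \<le> v" "v < 1"
    and "node_contains v D g" "k \<noteq> g"
    and "cnt st k + of_bool (corrupt_pass_pending v st k) \<le> n"
  shows "cnt (alg_step D C st \<sigma>) k \<le> n + of_bool (\<sigma> \<noteq> (posted_price st \<le> v))"
proof (cases "passedL \<and> passR st \<sigma> \<and> idx st = k")
  case True
  have "\<sigma> \<noteq> (posted_price st \<le> v)" if "honest_passL v st"
  proof -
    have "dep st = D" using assms(1,2) by (simp add: wf_state_def)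
    with True assms(5,6) have "\<not> node_contains v (dep st) (idx st)"
      using node_contains_unique by blast
    with that have "\<not> honest_passR v st"
      using node_contains_iff_honest_pass[OF assms(3,4)] by blast
    with True assms(1) show ?thesis
      by (auto simp: honest_passR_def posted_price_def passR_def)
  qed
  moreover have "cnt (alg_step D C st \<sigma>) k = Suc (cnt st k)"
    using True assms(1) by (simp add: alg_step_def)
  ultimately show ?thesis
    using True assms(1,7) by (cases "honest_passL v st") (simp_all add: corrupt_pass_pending_def)
next
  case False
  with assms(1) have "cnt (alg_step D C st \<sigma>) k = cnt st k"
    by (auto simp: alg_step_def goto_parent_def)
  with assms(7) show ?thesis by simp
qed

lemma counter_step:
  assumes "wf_state D C st" "0 \<le> v" "v < 1" "node_contains v D g" "k \<noteq> g"
    and "cnt st k + of_bool (corrupt_pass_pending v st k) \<le> n"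
  shows "cnt (alg_step D C st \<sigma>) k + of_bool (corrupt_pass_pending v (alg_step D C st \<sigma>) k)
           \<le> n + of_bool (\<sigma> \<noteq> (posted_price st \<le> v))"
proof -
  have old: "\<not> corrupt_pass_pending v st k" if "ph st \<noteq> LeafR True"
    using that by (simp add: corrupt_pass_pending_def)
  show ?thesis
  proof (cases "ph st")
    case LeafL
    then have step: "alg_step D C st \<sigma> = st\<lparr>ph := LeafR (passL st \<sigma>)\<rparr>"
      by (simp add: alg_step_def)
    have "\<sigma> \<noteq> (posted_price st \<le> v)" if "corrupt_pass_pending v (alg_step D C st \<sigma>) k"
      using that LeafL unfolding step by (auto simp: honest_passL_def posted_price_def passL_def)
    moreover have "cnt (alg_step D C st \<sigma>) k = cnt st k"
      unfolding step by simp
    ultimately show ?thesis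
      using LeafL old assms(6) by (cases "corrupt_pass_pending v (alg_step D C st \<sigma>) k") simp_all
  next
    case (LeafR passedL)
    then have "\<not> corrupt_pass_pending v (alg_step D C st \<sigma>) k"
      by (simp add: alg_step_def)
    with counter_step_LeafR[OF LeafR assms] show ?thesis by simp
  qed (use assms(6) old in \<open>simp_all add: alg_step_def goto_parent_def\<close>)
qed

section \<open>Regret\<close>

lemma tree_depth_bounds:
  assumes "1 \<le> T"
  shows "real T \<le> 2 ^ tree_depth T" and "real (tree_depth T) \<le> log 2 (real T) + 1"
proof -
  have ceil: "real (tree_depth T) = of_int \<lceil>log 2 (real T)\<rceil>"
    unfolding tree_depth_def using assms by simp
  have "real T = 2 powr (log 2 (real T))" using assms by simp
  also have "\<dots> \<le> 2 powr (real (tree_depth T))"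
    unfolding ceil by (intro powr_mono) auto
  finally show "real T \<le> 2 ^ tree_depth T" by (simp add: powr_realpow)
  show "real (tree_depth T) \<le> log 2 (real T) + 1"
    unfolding ceil by linarith
qed

lemma posted_price_nonneg: "0 \<le> posted_price st"
  by (simp add: posted_price_def left_end_def right_end_def mid_pt_def split: phase.split)

locale pricing_instance =
  fixes T C :: nat and adv :: adversary and v :: real and g :: nat
  assumes T_pos: "1 \<le> T" and v_nonneg: "0 \<le> v" and v_less_1: "v < 1"
    and g_contains: "node_contains v (tree_depth T) g"
    and few_corruptions: "card (corrupted_rounds T C adv v) \<le> C"
begin

definition state :: "nat \<Rightarrow> pstate" where
  "state t = fst (run T C adv t)"

lemma state_0: "state 0 = init_state (tree_depth T) C"
  by (simp add: state_def)

lemma state_Suc: "state (Suc t) = alg_step (tree_depth T) C (state t) (observed T C adv t)"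
  by (simp add: state_def observed_def price_def Let_def split: prod.split)

lemma price_eq: "price T C adv t = posted_price (state t)"
  by (simp add: price_def state_def)

abbreviation run_potential :: "nat \<Rightarrow> real" where
  "run_potential t \<equiv> real (potential (tree_depth T) C v g (state t))"

definition corrupted :: "nat \<Rightarrow> bool" where
  "corrupted t \<longleftrightarrow> observed T C adv t \<noteq> (price T C adv t \<le> v)"

lemma wf_state_run: "wf_state (tree_depth T) C (state t)"
  by (induction t) (simp_all add: state_0 state_Suc wf_state_init wf_state_step)

lemma counter_le_corruptions:
  assumes "k \<noteq> g"
  shows "cnt (state t) k + of_bool (corrupt_pass_pending v (state t) k) \<le> card {s. s < t \<and> corrupted s}"
proof (induction t)
  case 0
  show ?case by (simp add: state_0 init_state_def start_phase_def corrupt_pass_pending_def)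
next
  case (Suc t)
  have "{s. s < Suc t \<and> corrupted s} = {s. s < t \<and> corrupted s} \<union> (if corrupted t then {t} else {})"
    by (auto simp: less_Suc_eq)
  then have "card {s. s < Suc t \<and> corrupted s} = card {s. s < t \<and> corrupted s} + of_bool (corrupted t)"
    by simp
  with counter_step[OF wf_state_run v_nonneg v_less_1 g_contains assms Suc]
  show ?case by (simp add: state_Suc corrupted_def price_eq)
qed

lemma corruptions_before_le: "t \<le> T \<Longrightarrow> card {s. s < t \<and> corrupted s} \<le> C"
  using few_corruptions
  by (rule order_trans[rotated], intro card_mono)
    (auto simp: corrupted_rounds_def corrupted_def)

lemma commit_only_at_g:
  assumes "t \<le> T" "ph (state t) = Commit"
  shows "dep (state t) = tree_depth T" "idx (state t) = g"
proof -
  have "C < cnt (state t) (idx (state t))"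
    and "dep (state t) = tree_depth T" using wf_state_run[of t] assms(2) by (auto simp: wf_state_def)
  with counter_le_corruptions[of "idx (state t)" t] corruptions_before_le[OF assms(1)]
  show "dep (state t) = tree_depth T" "idx (state t) = g" by force+
qed

lemma round_loss_le:
  assumes "t < T"
  shows "v - price T C adv t * (if price T C adv t \<le> v then 1 else 0)
    \<le> 1 / real T + (run_potential t - run_potential (Suc t)) + 6 * of_bool (corrupted t)"
proof (cases "ph (state t) = Commit")
  case True
  then have "price T C adv t = left_end (tree_depth T) g"
    using commit_only_at_g[of t] assms by (simp add: price_eq posted_price_def)
  moreover have "v - left_end (tree_depth T) g < 1 / 2 ^ tree_depth T"
    using g_contains by (rule node_contains_gap)
  moreover have "1 / 2 ^ tree_depth T \<le> 1 / real T"
    using tree_depth_bounds(1)[OF T_pos] T_pos by (intro divide_left_mono) auto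
  moreover have "run_potential (Suc t) = run_potential t"
    using True by (simp add: state_Suc alg_step_def)
  ultimately show ?thesis
    using g_contains by (simp add: node_contains_def)
next
  case False
  note step = potential_step[OF wf_state_run v_nonneg v_less_1 g_contains False,
      where \<sigma> = "observed T C adv t", folded state_Suc]
  have "run_potential (Suc t) \<le> run_potential t + 5"
    using step(1) by linarith
  moreover have "\<not> corrupted t \<Longrightarrow> run_potential (Suc t) + 1 \<le> run_potential t"
    using step(2) unfolding corrupted_def price_eq by fastforce
  ultimately have "1 \<le> (run_potential t - run_potential (Suc t)) + 6 * of_bool (corrupted t)"
    by (cases "corrupted t") auto
  moreover have "0 \<le> 1 / real T" by simp
  moreover have "v - price T C adv t * (if price T C adv t \<le> v then 1 else 0) \<le> 1"
    using v_nonneg v_less_1 posted_price_nonneg[of "state t"] by (simp add: price_eq)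
  ultimately show ?thesis by linarith
qed

lemma regret_le: "regret T C adv v \<le> 3 * tree_depth T + 8 * C + 5"
proof -
  have "regret T C adv v = (\<Sum>t<T. v - price T C adv t * (if price T C adv t \<le> v then 1 else 0))"
    unfolding regret_def by (simp add: sum_subtractf)
  also have "\<dots> \<le> (\<Sum>t<T. 1 / real T + (run_potential t - run_potential (Suc t)) + 6 * of_bool (corrupted t))"
    by (intro sum_mono round_loss_le) simp
  also have "\<dots> = 1 + (run_potential 0 - run_potential T) + 6 * card {t. t < T \<and> corrupted t}"
  proof -
    have "{..<T} \<inter> {t. corrupted t} = {t. t < T \<and> corrupted t}" by auto
    then have "(\<Sum>t<T. of_bool (corrupted t)) = real (card {t. t < T \<and> corrupted t})" by simp
    moreover have "(\<Sum>t<T. run_potential t - run_potential (Suc t)) = run_potential 0 - run_potential T"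
      by (rule sum_lessThan_telescope')
    ultimately show ?thesis
      using T_pos by (simp add: sum.distrib sum_distrib_left[symmetric])
  qed
  also have "\<dots> \<le> 1 + (3 * tree_depth T + 2 * C + 4) + 6 * C"
    using corruptions_before_le[of T] by (simp add: state_0 potential_init)
  finally show ?thesis by simp
qed

end

theorem theorem4p3:
  "\<exists>K::real. \<forall>(T::nat) (C::nat) (v::real) (adv::adversary).
     T \<ge> 1 \<longrightarrow> 0 \<le> v \<longrightarrow> v < 1 \<longrightarrow> card (corrupted_rounds T C adv v) \<le> C \<longrightarrow>
     regret T C adv v \<le> K * (real C + log 2 (real T) + 1)"
proof (rule exI[of _ 8], intro allI impI)
  fix T C :: nat and v :: real and adv :: adversary
  assume T: "T \<ge> 1" and v: "0 \<le> v" "v < 1" and few: "card (corrupted_rounds T C adv v) \<le> C"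
  obtain g where "node_contains v (tree_depth T) g"
    using node_contains_exists[OF v(1)] by blast
  then interpret pricing_instance T C adv v g
    using T v few by unfold_locales
  have "regret T C adv v \<le> 3 * tree_depth T + 8 * C + 5"
    by (rule regret_le)
  also have "\<dots> \<le> 3 * (log 2 T + 1) + 8 * C + 5"
    using tree_depth_bounds(2)[OF T] by simp
  also have "\<dots> \<le> 8 * (C + log 2 T + 1)"
    using T by simp
  finally show "regret T C adv v \<le> 8 * (C + log 2 T + 1)" .
qed

end
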